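(* Let $X$ be a $[0,1]^d$-valued continuous random variable such that $h(X)$ and $H(\lfloor X\rfloor)$ are finite. Then $$\lim_{k\to\infty}I\big(\lfloor 2^kX\rfloor;\{2^kX\}\big)=0.$$
   Context: $\lfloor\cdot\rfloor$ and $\{x\}=x-\lfloor x\rfloor$ (integer and fractional parts) are applied componentwise. $I$ denotes mutual information, $H$ Shannon entropy, $h$ differential entropy; "continuous" means absolutely continuous w.r.t. Lebesgue measure. *)

theory Defs
  imports "HOL-Analysis.Analysis" "HOL-Probability.Probability"
begin

end

theory Submission
  imports Defs
begin

text \<open>
  Write \<open>A\<^sub>n = \<lfloor>n X\<rfloor>\<close> and \<open>B\<^sub>n = {n X}\<close>. The pair has joint density \<open>f ((a + u) / n) / n\<^sup>d\<close> on
  \<open>\<int>\<^sup>d \<times> [0,1)\<^sup>d\<close>, so with \<open>p\<^sub>n\<close> the law of \<open>A\<^sub>n\<close> and \<open>q\<^sub>n\<close> the density of \<open>B\<^sub>n\<close>,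
  \<open>I(A\<^sub>n; B\<^sub>n) = E log f(X) - E log (n\<^sup>d p\<^sub>n(A\<^sub>n)) - E log q\<^sub>n(B\<^sub>n) \<le> -h(X) - S\<^sub>n\<close>,
  where \<open>S\<^sub>n = \<Sum>\<^sub>a p\<^sub>n(a) log (n\<^sup>d p\<^sub>n(a))\<close> and the last expectation is nonnegative by Gibbs'
  inequality, \<open>q\<^sub>n\<close> living on a set of measure one. Now \<open>S\<^sub>n\<close> is the integral of \<open>t log t\<close> of
  the step function \<open>n\<^sup>d p\<^sub>n(\<lfloor>n x\<rfloor>)\<close> over the unit cube; by the Lebesgue differentiation
  theorem this step function tends to \<open>f\<close> almost everywhere, and since \<open>t log t\<close> is bounded
  below, Fatou's lemma gives \<open>liminf S\<^sub>n \<ge> -h(X)\<close>. Hence \<open>I(A\<^sub>n; B\<^sub>n) \<rightarrow> 0\<close>, in particular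
  along \<open>n = 2\<^sup>k\<close>.
\<close>

lemma Basis_vec_inner: "b \<in> (Basis :: (real^'d) set) \<Longrightarrow> \<exists>j. \<forall>y. y \<bullet> b = y $ j"
  unfolding Basis_vec_def by (auto simp: cart_eq_inner_axis)

lemma borel_measurable_vec_lambda[measurable (raw)]:
  fixes f :: "'d::finite \<Rightarrow> 'a \<Rightarrow> real"
  assumes "\<And>i. f i \<in> borel_measurable M"
  shows "(\<lambda>x. \<chi> i. f i x) \<in> borel_measurable M"
proof (subst borel_measurable_euclidean_space, intro ballI)
  fix b :: "real^'d" assume "b \<in> Basis"
  then obtain j where "\<forall>y::real^'d. y \<bullet> b = y $ j" using Basis_vec_inner by blast
  then show "(\<lambda>x. (\<chi> i. f i x) \<bullet> b) \<in> borel_measurable M" using assms by simp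
qed

lemma sum_Basis_vec_nth[simp]: "(\<Sum>x\<in>(Basis :: (real^'d) set). x $ i) = 1"
proof -
  have B: "(Basis :: (real^'d) set) = (\<lambda>j. axis j 1) ` UNIV" by (auto simp: Basis_vec_def)
  have "inj (\<lambda>j. axis j (1::real) :: real^'d)" by (auto simp: inj_on_def axis_eq_axis)
  then show ?thesis unfolding B by (subst sum.reindex) (auto simp: axis_def)
qed

lemma vec_nth_borel_measurable[measurable]: "(\<lambda>x::real^'d. x $ i) \<in> borel_measurable borel"
  by (intro borel_measurable_continuous_onI continuous_intros)

lemma AE_lborel_not_in_negligible:
  assumes "negligible N" shows "AE x in lborel. x \<notin> N"
proof -
  have "N \<in> null_sets lebesgue" using assms negligible_iff_null_sets by blast
  then have "AE x in lebesgue. x \<notin> N" by (rule AE_not_in)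
  then show ?thesis by (simp add: AE_completion_iff)
qed

lemma integrable_indicator_abs_diff:
  fixes f :: "'a \<Rightarrow> real"
  assumes f: "integrable M f" and S: "S \<in> sets M" "emeasure M S < \<infinity>"
  shows "integrable M (\<lambda>w. indicator S w * \<bar>f w - c\<bar>)"
proof -
  have "integrable M (\<lambda>z. \<bar>f z * indicator S z - indicator S z * c\<bar>)"
    using S by (intro integrable_abs Bochner_Integration.integrable_diff integrable_mult_left
        integrable_real_indicator integrable_real_mult_indicator f) auto
  then show ?thesis
    by (rule Bochner_Integration.integrable_cong[THEN iffD1, rotated -1]) (auto simp: indicator_def)
qed

lemma distributed_AE_density_pos:
  fixes h :: "'c \<Rightarrow> real"
  assumes D: "distributed M N Z (\<lambda>x. ennreal (h x))" and [measurable]: "h \<in> borel_measurable N"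
    and h_nonneg: "\<And>x. 0 \<le> h x"
  shows "AE \<omega> in M. 0 < h (Z \<omega>)"
proof -
  have Z[measurable]: "Z \<in> M \<rightarrow>\<^sub>M N" using D by (simp add: distributed_def)
  have Sz: "{x \<in> space N. h x = 0} \<in> sets N" by measurable
  have "emeasure M (Z -` {x \<in> space N. h x = 0} \<inter> space M)
      = (\<integral>\<^sup>+ x. ennreal (h x) * indicator {x \<in> space N. h x = 0} x \<partial>N)"
    by (rule distributed_emeasure[OF D Sz])
  also have "\<dots> = (\<integral>\<^sup>+ x. 0 \<partial>N)" by (intro nn_integral_cong) (auto simp: indicator_def)
  finally show ?thesis
    by (intro AE_I[of _ _ "Z -` {x \<in> space N. h x = 0} \<inter> space M"])
      (use h_nonneg measurable_space[OF Z] Sz in \<open>auto simp: less_le\<close>)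
qed

lemma eventually_integral_gt_of_AE_tendsto:
  fixes u :: "nat \<Rightarrow> 'a \<Rightarrow> real"
  assumes u: "\<And>n. integrable M (u n)" "\<And>n x. 0 \<le> u n x"
    and v: "integrable M v" "\<And>x. 0 \<le> v x"
    and lim: "AE x in M. (\<lambda>n. u n x) \<longlonglongrightarrow> v x" and e: "0 < e"
  shows "\<forall>\<^sub>F n in sequentially. (\<integral>x. v x \<partial>M) - e < (\<integral>x. u n x \<partial>M)"
proof -
  have [measurable]: "u n \<in> borel_measurable M" for n using u(1) by (rule borel_measurable_integrable)
  have "ennreal (\<integral>x. v x \<partial>M) = (\<integral>\<^sup>+ x. liminf (\<lambda>n. ennreal (u n x)) \<partial>M)"
    by (subst nn_integral_eq_integral[OF v(1), symmetric])
      (use v(2) lim in \<open>auto intro!: nn_integral_cong_AE lim_imp_Liminf[symmetric] tendsto_ennrealI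
          elim!: eventually_mono\<close>)
  also have "\<dots> \<le> liminf (\<lambda>n. \<integral>\<^sup>+ x. ennreal (u n x) \<partial>M)"
    by (rule nn_integral_liminf) measurable
  also have "\<dots> = liminf (\<lambda>n. ennreal (\<integral>x. u n x \<partial>M))"
    by (simp add: nn_integral_eq_integral u)
  finally have liminf_ge: "ennreal (\<integral>x. v x \<partial>M) \<le> liminf (\<lambda>n. ennreal (\<integral>x. u n x \<partial>M))" .
  show ?thesis
  proof (cases "(\<integral>x. v x \<partial>M) - e < 0")
    case True
    show ?thesis
    proof (intro always_eventually allI)
      fix n
      have "0 \<le> (\<integral>x. u n x \<partial>M)" using u(2) by (simp add: Bochner_Integration.integral_nonneg)
      then show "(\<integral>x. v x \<partial>M) - e < (\<integral>x. u n x \<partial>M)" using True by linarith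
    qed
  next
    case False
    then have "ennreal ((\<integral>x. v x \<partial>M) - e) < ennreal (\<integral>x. v x \<partial>M)"
      using e by (subst ennreal_less_iff) auto
    then have "ennreal ((\<integral>x. v x \<partial>M) - e) < liminf (\<lambda>n. ennreal (\<integral>x. u n x \<partial>M))"
      using liminf_ge by (rule less_le_trans)
    then have "\<forall>\<^sub>F n in sequentially. ennreal ((\<integral>x. v x \<partial>M) - e) < ennreal (\<integral>x. u n x \<partial>M)"
      by (rule less_LiminfD)
    then show ?thesis by eventually_elim (use False in \<open>simp add: ennreal_less_iff\<close>)
  qed
qed

lemma abs_mult_ln_le_sqrt:
  fixes s :: real assumes "0 \<le> s" "s \<le> 1" shows "\<bar>s * ln s\<bar> \<le> 2 * sqrt s"
proof (cases "s = 0")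
  case False
  then have s: "0 < s" "0 < sqrt s" using assms by auto
  have "- ln (sqrt s) \<le> 1 / sqrt s - 1"
    using ln_le_minus_one[of "1 / sqrt s"] s by (simp add: ln_div)
  then have "- ln s \<le> 2 / sqrt s" using s by (simp add: ln_sqrt)
  moreover have "ln s \<le> 0" using s assms by simp
  ultimately have "\<bar>s * ln s\<bar> \<le> s * (2 / sqrt s)"
    using s mult_left_mono[of "- ln s" "2 / sqrt s" s] by (simp add: abs_mult)
  also have "\<dots> = 2 * sqrt s" using s by (simp add: field_simps real_sqrt_divide sqrt_divide_self_eq)
  finally show ?thesis .
qed simp

lemma tendsto_mult_log:
  fixes s :: "nat \<Rightarrow> real"
  assumes lim: "s \<longlonglongrightarrow> t" and s: "\<And>k. 0 \<le> s k" and t: "0 \<le> t" and b: "1 < b"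
  shows "(\<lambda>k. s k * log b (s k)) \<longlonglongrightarrow> t * log b t"
proof (cases "t = 0")
  case False
  then show ?thesis using b t by (intro tendsto_intros lim) auto
next
  case True
  have lb: "0 < ln b" using b by simp
  have "\<forall>\<^sub>F k in sequentially. s k < 1"
    using order_tendstoD(2)[OF lim, of 1] True by simp
  then have "\<forall>\<^sub>F k in sequentially. norm (s k * log b (s k)) \<le> 2 * sqrt (s k) / ln b"
  proof eventually_elim
    case (elim k)
    then show ?case
      using abs_mult_ln_le_sqrt[of "s k"] s[of k] lb by (simp add: log_def abs_mult divide_right_mono)
  qed
  moreover have "(\<lambda>k. 2 * sqrt (s k) / ln b) \<longlonglongrightarrow> 0"
    using tendsto_divide[OF tendsto_mult[OF tendsto_const tendsto_real_sqrt[OF lim]] tendsto_const, of "ln b" 2]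
      True b by simp
  ultimately show ?thesis using True by (simp add: Lim_null_comparison)
qed

lemma one_minus_inverse_le_ln: "0 < t \<Longrightarrow> 1 - 1 / t \<le> ln (t :: real)"
  using ln_le_minus_one[of "1 / t"] by (simp add: ln_div)

lemma mult_log_ge: assumes "0 \<le> t" "1 < b" shows "- (1 / ln b) \<le> t * log b t"
proof -
  have "t - 1 \<le> t * ln t"
  proof (cases "t = 0")
    case False
    then show ?thesis
      using mult_left_mono[OF one_minus_inverse_le_ln[of t], of t] assms by (simp add: right_diff_distrib)
  qed simp
  then have "-1 / ln b \<le> t * ln t / ln b"
    using assms by (intro divide_right_mono) auto
  then show ?thesis by (simp add: log_def)
qed

section \<open>Lebesgue points\<close>

definition reflect :: "('d::finite \<Rightarrow> bool) \<Rightarrow> real^'d \<Rightarrow> real^'d" where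
  "reflect \<sigma> x = (\<chi> i. if \<sigma> i then - x$i else x$i)"

lemma reflect_reflect[simp]: "reflect \<sigma> (reflect \<sigma> x) = x"
  by (simp add: reflect_def vec_eq_iff)

lemma linear_reflect: "linear (reflect \<sigma>)"
  by (rule linearI) (auto simp: reflect_def vec_eq_iff)

lemma reflect_measurable[measurable]: "reflect \<sigma> \<in> borel_measurable borel"
  by (intro borel_measurable_continuous_onI linear_continuous_on linear_reflect[THEN linear_conv_bounded_linear[THEN iffD1]])

lemma reflect_axis: "reflect \<sigma> (axis i 1) = axis i (if \<sigma> i then -1 else 1)"
  by (auto simp: reflect_def vec_eq_iff axis_def)

lemma reflect_Basis: "j \<in> Basis \<Longrightarrow> reflect \<sigma> j = (reflect \<sigma> j \<bullet> j) *\<^sub>R j"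
  unfolding Basis_vec_def by (auto simp: reflect_axis inner_axis_axis) (auto simp: vec_eq_iff axis_def)

lemma abs_reflect_Basis_inner: "j \<in> Basis \<Longrightarrow> \<bar>reflect \<sigma> j \<bullet> j\<bar> = 1"
  by (auto simp: Basis_vec_def reflect_axis inner_axis_axis)

lemma lborel_distr_reflect: "distr lborel borel (reflect \<sigma>) = (lborel :: (real^'d::finite) measure)"
proof -
  have c: "\<And>j. j \<in> Basis \<Longrightarrow> \<bar>reflect \<sigma> j \<bullet> j\<bar> = 1" by (rule abs_reflect_Basis_inner)
  have sum: "reflect \<sigma> x = (\<Sum>j\<in>Basis. ((reflect \<sigma> j \<bullet> j) * (x \<bullet> j)) *\<^sub>R j)" for x :: "real^'d"
  proof -
    have "reflect \<sigma> x = (\<Sum>j\<in>Basis. (x \<bullet> j) *\<^sub>R reflect \<sigma> j)"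
      by (subst euclidean_representation[symmetric, of x])
        (simp add: linear_sum[OF linear_reflect] linear_cmul[OF linear_reflect] o_def)
    also have "\<dots> = (\<Sum>j\<in>Basis. ((reflect \<sigma> j \<bullet> j) * (x \<bullet> j)) *\<^sub>R j)"
      by (intro sum.cong refl) (subst reflect_Basis, auto)
    finally show ?thesis .
  qed
  have "lborel = density (distr lborel borel (\<lambda>x. 0 + (\<Sum>j\<in>Basis. ((reflect \<sigma> j \<bullet> j) * (x \<bullet> j)) *\<^sub>R j)))
      (\<lambda>_. (\<Prod>j\<in>(Basis::(real^'d) set). \<bar>reflect \<sigma> j \<bullet> j\<bar>))"
    by (rule lborel_affine_euclidean) (use c in fastforce)
  also have "(\<lambda>x. 0 + (\<Sum>j\<in>Basis. ((reflect \<sigma> j \<bullet> j) * (x \<bullet> j)) *\<^sub>R j)) = reflect \<sigma>"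
    by (simp add: sum[symmetric] fun_eq_iff)
  finally show ?thesis by (simp add: c density_1)
qed

lemma AE_lborel_reflect:
  assumes "AE z in lborel. P z" shows "AE x in lborel. P (reflect \<sigma> x)"
proof -
  from assms obtain N where N: "{z \<in> space lborel. \<not> P z} \<subseteq> N" "emeasure lborel N = 0" "N \<in> sets lborel"
    by (rule AE_E)
  have "emeasure lborel (reflect \<sigma> -` N \<inter> space lborel) = emeasure (distr lborel borel (reflect \<sigma>)) N"
    using N(3) by (simp add: emeasure_distr)
  also have "\<dots> = 0" using N(2) by (simp add: lborel_distr_reflect)
  finally show ?thesis
    by (intro AE_I[of _ _ "reflect \<sigma> -` N \<inter> space lborel"])
      (use N(1) N(3) measurable_sets_borel[OF reflect_measurable, of N \<sigma>] in auto)
qed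

lemma integrable_lborel_reflect:
  fixes f :: "real^'d::finite \<Rightarrow> real"
  assumes "integrable lborel f" shows "integrable lborel (\<lambda>x. f (reflect \<sigma> x))"
proof -
  have "integrable (distr lborel borel (reflect \<sigma>)) f" using assms by (simp add: lborel_distr_reflect)
  then show ?thesis
    using borel_measurable_integrable[OF assms] by (subst (asm) integrable_distr_eq) auto
qed

lemma integral_lborel_reflect:
  fixes f :: "real^'d::finite \<Rightarrow> real"
  assumes "f \<in> borel_measurable borel"
  shows "(\<integral>x. f (reflect \<sigma> x) \<partial>lborel) = (\<integral>x. f x \<partial>lborel)"
  using integral_distr[of "reflect \<sigma>" lborel borel f] assms by (simp add: lborel_distr_reflect)

lemma AE_lborel_corner_average:
  fixes F :: "real^'d::finite \<Rightarrow> real"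
  assumes si: "\<And>a b. set_integrable lborel (cbox a b) F"
  shows "AE x in lborel.
    ((\<lambda>h. (LINT y:cbox x (x + h *\<^sub>R One)|lborel. F y) / h ^ CARD('d)) \<longlongrightarrow> F x) (at_right 0)"
proof -
  have "F integrable_on cbox a b" for a b
    using set_borel_integral_eq_integral(1)[OF si] by auto
  then obtain N where N: "negligible N" and conv: "\<And>x e. \<lbrakk>x \<notin> N; 0 < e\<rbrakk> \<Longrightarrow>
      \<exists>d>0. \<forall>h. 0 < h \<and> h < d \<longrightarrow>
        norm (integral (cbox x (x + h *\<^sub>R One)) F /\<^sub>R h ^ DIM(real^'d) - F x) < e"
    using integrable_ccontinuous_explicit[of F] by metis
  from AE_lborel_not_in_negligible[OF N] show ?thesis
  proof eventually_elim
    case (elim x)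
    show ?case unfolding tendsto_iff
    proof (intro allI impI)
      fix e :: real assume "0 < e"
      with conv[OF elim] obtain d where d: "d > 0" "\<And>h. 0 < h \<Longrightarrow> h < d \<Longrightarrow>
          norm (integral (cbox x (x + h *\<^sub>R One)) F /\<^sub>R h ^ DIM(real^'d) - F x) < e"
        by blast
      from eventually_at_right_real[OF d(1)]
      show "\<forall>\<^sub>F h in at_right 0. dist ((LINT y:cbox x (x + h *\<^sub>R One)|lborel. F y) / h ^ CARD('d)) (F x) < e"
        by eventually_elim
          (use d(2) in \<open>simp add: set_borel_integral_eq_integral(2)[OF si] dist_real_def divide_inverse mult.commute\<close>)
    qed
  qed
qed

text \<open>The cube of side \<open>h\<close> with vertex \<open>x\<close> that extends backwards in the coordinates selected
  by \<open>\<sigma>\<close>; the \<open>2\<^sup>d\<close> such cubes cover the centred cube of radius \<open>h\<close>.\<close>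
definition orthant_box :: "('d::finite \<Rightarrow> bool) \<Rightarrow> real^'d \<Rightarrow> real \<Rightarrow> (real^'d) set" where
  "orthant_box \<sigma> x h = reflect \<sigma> -` cbox (reflect \<sigma> x) (reflect \<sigma> x + h *\<^sub>R One)"

lemma orthant_box_sets[measurable]: "orthant_box \<sigma> x h \<in> sets borel"
  unfolding orthant_box_def
  using measurable_sets_borel[OF reflect_measurable, of "cbox (reflect \<sigma> x) (reflect \<sigma> x + h *\<^sub>R One)" \<sigma>]
  by simp

lemma emeasure_orthant_box_finite: "emeasure lborel (orthant_box \<sigma> x h) < \<infinity>"
proof -
  have "emeasure lborel (orthant_box \<sigma> x h)
      = emeasure (distr lborel borel (reflect \<sigma>)) (cbox (reflect \<sigma> x) (reflect \<sigma> x + h *\<^sub>R One))"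
    by (subst emeasure_distr) (auto simp: orthant_box_def)
  then show ?thesis
    using emeasure_lborel_cbox_finite[of "reflect \<sigma> x" "reflect \<sigma> x + h *\<^sub>R One"]
    by (simp add: lborel_distr_reflect)
qed

lemma mem_orthant_box:
  fixes x w :: "real^'d::finite"
  assumes "w \<in> cbox (x - h *\<^sub>R One) (x + h *\<^sub>R One)"
  shows "w \<in> orthant_box (\<lambda>i. w$i < x$i) x h"
proof -
  have H: "x$i - h \<le> w$i \<and> w$i \<le> x$i + h" for i using assms by (simp add: mem_box_cart)
  have "reflect \<sigma> x $ i \<le> reflect \<sigma> w $ i \<and> reflect \<sigma> w $ i \<le> reflect \<sigma> x $ i + h"
    if "\<sigma> = (\<lambda>i. w$i < x$i)" for i \<sigma>
    using that H[of i] by (auto simp: reflect_def)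
  then show ?thesis unfolding orthant_box_def vimage_eq mem_box_cart by simp
qed

lemma AE_lborel_orthant_average:
  fixes f :: "real^'d::finite \<Rightarrow> real"
  assumes f: "integrable lborel f"
  shows "AE x in lborel.
    ((\<lambda>h. (LINT w:orthant_box \<sigma> x h|lborel. \<bar>f w - r\<bar>) / h ^ CARD('d)) \<longlongrightarrow> \<bar>f x - r\<bar>) (at_right 0)"
proof -
  define F where "F z = \<bar>f (reflect \<sigma> z) - r\<bar>" for z
  have [measurable]: "f \<in> borel_measurable borel" using borel_measurable_integrable[OF f] by simp
  have "set_integrable lborel (cbox a b) F" for a b
    unfolding set_integrable_def F_def real_scaleR_def
    by (rule integrable_indicator_abs_diff[OF integrable_lborel_reflect[OF f] _ emeasure_lborel_cbox_finite])
      simp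
  then have "AE x in lborel. ((\<lambda>h. (LINT y:cbox (reflect \<sigma> x) (reflect \<sigma> x + h *\<^sub>R One)|lborel. F y)
      / h ^ CARD('d)) \<longlongrightarrow> F (reflect \<sigma> x)) (at_right 0)"
    by (intro AE_lborel_reflect AE_lborel_corner_average)
  moreover have "(LINT y:cbox (reflect \<sigma> x) (reflect \<sigma> x + h *\<^sub>R One)|lborel. F y)
      = (LINT w:orthant_box \<sigma> x h|lborel. \<bar>f w - r\<bar>)" for x h
    unfolding set_lebesgue_integral_def
    by (subst integral_lborel_reflect[symmetric, of _ \<sigma>])
      (auto simp: F_def orthant_box_def indicator_def)
  ultimately show ?thesis by (simp add: F_def)
qed

lemma measure_lborel_centered_cbox:
  assumes "0 \<le> h"
  shows "measure lborel (cbox (x - h *\<^sub>R One) (x + h *\<^sub>R (One::real^'d::finite))) = (2*h) ^ CARD('d)"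
proof -
  have "b \<in> Basis \<Longrightarrow> (x + h *\<^sub>R One - (x - h *\<^sub>R One)) \<bullet> b = 2 * h
      \<and> (x - h *\<^sub>R One) \<bullet> b \<le> (x + h *\<^sub>R One) \<bullet> b" for b :: "real^'d"
    using assms by (drule_tac Basis_vec_inner) auto
  then have "(\<Prod>b\<in>(Basis::(real^'d) set). (x + h *\<^sub>R One - (x - h *\<^sub>R One)) \<bullet> b) = (2*h) ^ CARD('d)"
    "\<forall>b\<in>Basis. (x - h *\<^sub>R One) \<bullet> b \<le> (x + h *\<^sub>R One) \<bullet> b"
    by (simp_all add: prod.cong[OF refl, of _ _ "\<lambda>_. 2 * h"])
  then show ?thesis by (simp add: measure_lborel_cbox_eq)
qed

lemma centered_average_le_orthant_averages:
  fixes f :: "real^'d::finite \<Rightarrow> real"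
  assumes f: "integrable lborel f" and h: "0 < h"
  shows "(LINT w:cbox (x - h *\<^sub>R One) (x + h *\<^sub>R One)|lborel. \<bar>f w - f x\<bar>) / h ^ CARD('d)
    \<le> (\<Sum>\<sigma>\<in>UNIV. (LINT w:orthant_box \<sigma> x h|lborel. \<bar>f w - r\<bar>) / h ^ CARD('d)) + 2 ^ CARD('d) * \<bar>f x - r\<bar>"
proof -
  let ?C = "cbox (x - h *\<^sub>R One) (x + h *\<^sub>R One)"
  have iO: "integrable lborel (\<lambda>w. indicator (orthant_box \<sigma> x h) w * \<bar>f w - r\<bar>)" for \<sigma>
    by (rule integrable_indicator_abs_diff[OF f _ emeasure_orthant_box_finite]) simp
  have iC: "integrable lborel (\<lambda>w. indicator ?C w * c)" for c :: real
    using emeasure_lborel_cbox_finite by (intro integrable_mult_left integrable_real_indicator) auto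
  have iCf: "integrable lborel (\<lambda>w. indicator ?C w * \<bar>f w - f x\<bar>)"
    by (rule integrable_indicator_abs_diff[OF f _ emeasure_lborel_cbox_finite]) simp
  have pointwise: "indicator ?C w * \<bar>f w - f x\<bar>
      \<le> (\<Sum>\<sigma>\<in>UNIV. indicator (orthant_box \<sigma> x h) w * \<bar>f w - r\<bar>) + indicator ?C w * \<bar>f x - r\<bar>" for w
  proof (cases "w \<in> ?C")
    case True
    have "\<bar>f w - r\<bar> = indicator (orthant_box (\<lambda>i. w$i < x$i) x h) w * \<bar>f w - r\<bar>"
      using mem_orthant_box[OF True] by simp
    also have "\<dots> \<le> (\<Sum>\<sigma>\<in>UNIV. indicator (orthant_box \<sigma> x h) w * \<bar>f w - r\<bar>)"
      by (rule member_le_sum) auto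
    finally show ?thesis using True by auto
  qed (auto intro!: sum_nonneg)
  have "(LINT w:?C|lborel. \<bar>f w - f x\<bar>)
      \<le> (\<integral>w. (\<Sum>\<sigma>\<in>UNIV. indicator (orthant_box \<sigma> x h) w * \<bar>f w - r\<bar>) + indicator ?C w * \<bar>f x - r\<bar> \<partial>lborel)"
    unfolding set_lebesgue_integral_def real_scaleR_def
    by (intro integral_mono pointwise iCf Bochner_Integration.integrable_add
        Bochner_Integration.integrable_sum iO iC)
  also have "\<dots> = (\<integral>w. (\<Sum>\<sigma>\<in>UNIV. indicator (orthant_box \<sigma> x h) w * \<bar>f w - r\<bar>) \<partial>lborel)
      + (\<integral>w. indicator ?C w * \<bar>f x - r\<bar> \<partial>lborel)"
    by (intro Bochner_Integration.integral_add Bochner_Integration.integrable_sum iO iC)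
  also have "\<dots> = (\<Sum>\<sigma>\<in>UNIV. (LINT w:orthant_box \<sigma> x h|lborel. \<bar>f w - r\<bar>)) + \<bar>f x - r\<bar> * (2*h) ^ CARD('d)"
    unfolding set_lebesgue_integral_def real_scaleR_def
    by (subst Bochner_Integration.integral_sum[OF iO]) (use h in \<open>simp_all add: measure_lborel_centered_cbox\<close>)
  finally have "(LINT w:?C|lborel. \<bar>f w - f x\<bar>) / h ^ CARD('d)
      \<le> ((\<Sum>\<sigma>\<in>UNIV. (LINT w:orthant_box \<sigma> x h|lborel. \<bar>f w - r\<bar>)) + \<bar>f x - r\<bar> * (2*h) ^ CARD('d)) / h ^ CARD('d)"
    using h by (intro divide_right_mono) auto
  also have "\<dots> = (\<Sum>\<sigma>\<in>UNIV. (LINT w:orthant_box \<sigma> x h|lborel. \<bar>f w - r\<bar>) / h ^ CARD('d)) + 2 ^ CARD('d) * \<bar>f x - r\<bar>"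
    using h by (simp add: add_divide_distrib sum_divide_distrib power_mult_distrib)
  finally show ?thesis .
qed

lemma tendsto_zero_by_rational_approximation:
  fixes B :: "'a \<Rightarrow> real" and A :: "real \<Rightarrow> 'a \<Rightarrow> real"
  assumes lim: "\<And>r. r \<in> \<rat> \<Longrightarrow> (A r \<longlongrightarrow> C * \<bar>c - r\<bar>) F"
    and bound: "\<forall>\<^sub>F h in F. \<forall>r. 0 \<le> B h \<and> B h \<le> A r h + C' * \<bar>c - r\<bar>"
    and C: "0 \<le> C" "0 \<le> C'"
  shows "(B \<longlongrightarrow> 0) F"
  unfolding tendsto_iff
proof (intro allI impI)
  fix e :: real assume e: "0 < e"
  define \<delta> where "\<delta> = e / (2 * (C + C' + 1))"
  have \<delta>: "0 < \<delta>" "(C + C') * \<delta> < e / 2"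
    using e C by (auto simp: \<delta>_def field_simps)
  obtain r where r: "r \<in> \<rat>" "c - \<delta> < r" "r < c + \<delta>"
    using Rats_dense_in_real[of "c - \<delta>" "c + \<delta>"] \<delta> by auto
  then have Cr: "C * \<bar>c - r\<bar> \<le> C * \<delta>" "C' * \<bar>c - r\<bar> \<le> C' * \<delta>"
    using C by (auto intro!: mult_left_mono)
  have "\<forall>\<^sub>F h in F. dist (A r h) (C * \<bar>c - r\<bar>) < e / 2"
    using tendsto_iff[THEN iffD1, OF lim[OF r(1)], rule_format, of "e / 2"] e by simp
  then have "\<forall>\<^sub>F h in F. A r h < C * \<bar>c - r\<bar> + e / 2"
    by eventually_elim (simp only: dist_real_def abs_less_iff, linarith)
  with bound show "\<forall>\<^sub>F h in F. dist (B h) 0 < e"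
  proof eventually_elim
    case (elim h)
    then have "0 \<le> B h" "B h \<le> A r h + C' * \<bar>c - r\<bar>" by auto
    then show ?case
      using elim(2) Cr \<delta> distrib_right[of C C' \<delta>] by (simp add: dist_real_def)
  qed
qed

theorem AE_lborel_Lebesgue_point:
  fixes f :: "real^'d::finite \<Rightarrow> real"
  assumes f: "integrable lborel f"
  shows "AE x in lborel.
    ((\<lambda>h. (LINT w:cbox (x - h *\<^sub>R One) (x + h *\<^sub>R One)|lborel. \<bar>f w - f x\<bar>) / h ^ CARD('d)) \<longlongrightarrow> 0) (at_right 0)"
proof -
  let ?avg = "\<lambda>\<sigma> r x h. (LINT w:orthant_box \<sigma> x h|lborel. \<bar>f w - r\<bar>) / h ^ CARD('d)"
  have "AE x in lborel. \<forall>r\<in>\<rat>. \<forall>\<sigma>\<in>UNIV. (?avg \<sigma> r x \<longlongrightarrow> \<bar>f x - r\<bar>) (at_right 0)"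
    by (intro AE_ball_countable' AE_lborel_orthant_average[OF f]) (auto simp: countable_rat)
  then show ?thesis
  proof eventually_elim
    case (elim x)
    show ?case
    proof (rule tendsto_zero_by_rational_approximation)
      show "((\<lambda>h. \<Sum>\<sigma>\<in>UNIV. ?avg \<sigma> r x h) \<longlongrightarrow> real CARD('d \<Rightarrow> bool) * \<bar>f x - r\<bar>) (at_right 0)"
        if "r \<in> \<rat>" for r
        using tendsto_sum[of UNIV "\<lambda>\<sigma>. ?avg \<sigma> r x" "\<lambda>_. \<bar>f x - r\<bar>"] elim that by simp
      show "\<forall>\<^sub>F h in at_right 0. \<forall>r.
          0 \<le> (LINT w:cbox (x - h *\<^sub>R One) (x + h *\<^sub>R One)|lborel. \<bar>f w - f x\<bar>) / h ^ CARD('d)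
        \<and> (LINT w:cbox (x - h *\<^sub>R One) (x + h *\<^sub>R One)|lborel. \<bar>f w - f x\<bar>) / h ^ CARD('d)
          \<le> (\<Sum>\<sigma>\<in>UNIV. ?avg \<sigma> r x h) + 2 ^ CARD('d) * \<bar>f x - r\<bar>"
        using eventually_at_right_less[of 0]
        by eventually_elim
          (use centered_average_le_orthant_averages[OF f] in \<open>auto simp: set_lebesgue_integral_def\<close>)
    qed auto
  qed
qed

section \<open>Grid cells\<close>

definition cell_index :: "nat \<Rightarrow> real^'d \<Rightarrow> int^'d" where
  "cell_index n x = (\<chi> i. \<lfloor>real n * x$i\<rfloor>)"

definition cell_offset :: "nat \<Rightarrow> real^'d \<Rightarrow> real^'d" where
  "cell_offset n x = (\<chi> i. frac (real n * x$i))"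

definition cell_point :: "nat \<Rightarrow> int^'d \<Rightarrow> real^'d \<Rightarrow> real^'d" where
  "cell_point n a u = (\<chi> i. (real_of_int (a$i) + u$i) / real n)"

definition unit_cube :: "(real^'d) set" where
  "unit_cube = {u. \<forall>i. 0 \<le> u$i \<and> u$i < 1}"

definition unit_cube_cells :: "nat \<Rightarrow> (int^'d) set" where
  "unit_cube_cells n = {a. \<forall>i. 0 \<le> a$i \<and> a$i < int n}"

lemma cell_index_preimage_sets[measurable]: "{x. cell_index n x = a} \<in> sets (borel :: (real^'d) measure)"
proof -
  have "{x. cell_index n x = a}
      = (\<Inter>i. {x::real^'d. real_of_int (a$i) \<le> real n * x$i \<and> real n * x$i < real_of_int (a$i) + 1})"
    by (auto simp: cell_index_def vec_eq_iff floor_eq_iff)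
  then show ?thesis by (simp add: sets.countable_INT')
qed

lemma cell_index_measurable[measurable]: "cell_index n \<in> (borel :: (real^'d) measure) \<rightarrow>\<^sub>M count_space UNIV"
  using cell_index_preimage_sets[of n]
  by (subst measurable_count_space_eq_countable) (auto simp: vimage_def)

lemma cell_offset_measurable[measurable]: "cell_offset n \<in> (borel :: (real^'d) measure) \<rightarrow>\<^sub>M borel"
  unfolding cell_offset_def frac_def by measurable

lemma cell_point_measurable[measurable]: "cell_point n a \<in> (borel :: (real^'d) measure) \<rightarrow>\<^sub>M borel"
  unfolding cell_point_def by measurable

lemma unit_cube_sets[measurable]: "unit_cube \<in> sets (borel :: (real^'d) measure)"
proof -
  have eq: "unit_cube = (\<Inter>i. {u::real^'d. 0 \<le> u$i \<and> u$i < 1})" by (auto simp: unit_cube_def)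
  show ?thesis unfolding eq by (intro sets.countable_INT') auto
qed

lemma cell_index_cell_point_iff: "n > 0 \<Longrightarrow> cell_index n (cell_point n a u) = a \<longleftrightarrow> u \<in> unit_cube"
  by (auto simp: cell_index_def cell_point_def unit_cube_def vec_eq_iff floor_eq_iff)

lemma cell_offset_cell_point: "n > 0 \<Longrightarrow> u \<in> unit_cube \<Longrightarrow> cell_offset n (cell_point n a u) = u"
  by (auto simp: cell_offset_def cell_point_def unit_cube_def vec_eq_iff frac_eq)

lemma cell_point_index_offset: "n > 0 \<Longrightarrow> cell_point n (cell_index n x) (cell_offset n x) = x"
  by (simp add: cell_point_def cell_index_def cell_offset_def vec_eq_iff frac_def)

lemma cell_offset_in_unit_cube: "cell_offset n x \<in> unit_cube"
  by (simp add: cell_offset_def unit_cube_def frac_lt_1)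

lemma cell_index_in_unit_cube_cells_iff: "n > 0 \<Longrightarrow> cell_index n x \<in> unit_cube_cells n \<longleftrightarrow> x \<in> unit_cube"
proof -
  assume n: "n > 0"
  have "0 \<le> \<lfloor>real n * t\<rfloor> \<and> \<lfloor>real n * t\<rfloor> < int n \<longleftrightarrow> 0 \<le> t \<and> t < 1" for t
  proof -
    have "0 \<le> \<lfloor>real n * t\<rfloor> \<longleftrightarrow> 0 \<le> t" using n by (simp add: zero_le_mult_iff)
    moreover have "\<lfloor>real n * t\<rfloor> < int n \<longleftrightarrow> t < 1" using n by (simp add: floor_less_iff)
    ultimately show ?thesis by blast
  qed
  then show ?thesis by (simp add: unit_cube_cells_def cell_index_def unit_cube_def)
qed

lemma finite_unit_cube_cells: "finite (unit_cube_cells n :: (int^'d) set)"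
proof -
  have "(unit_cube_cells n :: (int^'d) set) \<subseteq> vec_lambda ` (PiE UNIV (\<lambda>_. {0..<int n}))"
    by (auto simp: unit_cube_cells_def intro!: image_eqI[of _ _ "vec_nth _"])
  then show ?thesis by (rule finite_subset) (intro finite_imageI finite_PiE; simp)
qed

lemma cell_subset_centered_cbox:
  assumes n: "n > 0" and "cell_index n y = cell_index n x"
  shows "y \<in> cbox (x - (1 / real n) *\<^sub>R One) (x + (1 / real n) *\<^sub>R One)"
  unfolding mem_box_cart
proof
  fix i
  have "\<lfloor>real n * y$i\<rfloor> = \<lfloor>real n * x$i\<rfloor>" using assms(2) by (simp add: cell_index_def vec_eq_iff)
  then have "real n * (y$i - x$i) < 1" "real n * (x$i - y$i) < 1"
    by (simp_all add: right_diff_distrib) linarith+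
  then have "y$i - x$i < 1 / real n" "x$i - y$i < 1 / real n"
    using n by (simp_all add: less_divide_eq mult.commute)
  then show "(x - (1 / real n) *\<^sub>R One) $ i \<le> y $ i \<and> y $ i \<le> (x + (1 / real n) *\<^sub>R One) $ i"
    by simp
qed

lemma emeasure_unit_cube: "emeasure lborel (unit_cube :: (real^'d) set) = 1"
proof -
  have "(\<Prod>b\<in>(Basis::(real^'d) set). (One - 0) \<bullet> b) = 1" "\<forall>b\<in>(Basis::(real^'d) set). 0 \<bullet> b \<le> One \<bullet> b"
    by (auto dest: Basis_vec_inner intro: prod.neutral)
  then have cube: "emeasure lborel (box 0 (One::real^'d)) = 1" "emeasure lborel (cbox 0 (One::real^'d)) = 1"
    by (simp_all add: emeasure_lborel_box_eq emeasure_lborel_cbox_eq)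
  have sub: "box 0 One \<subseteq> (unit_cube :: (real^'d) set)" "(unit_cube :: (real^'d) set) \<subseteq> cbox 0 One"
    by (auto simp: unit_cube_def mem_box_cart less_imp_le)
  have "emeasure lborel (box 0 (One::real^'d)) \<le> emeasure lborel (unit_cube :: (real^'d) set)"
    by (rule emeasure_mono[OF sub(1)]) simp
  moreover have "emeasure lborel (unit_cube :: (real^'d) set) \<le> emeasure lborel (cbox 0 (One::real^'d))"
    by (rule emeasure_mono[OF sub(2)]) simp
  ultimately show ?thesis unfolding cube by (rule antisym[rotated])
qed

lemma nn_integral_cell:
  fixes H :: "real^'d \<Rightarrow> ennreal"
  assumes n: "n > 0" and [measurable]: "H \<in> borel_measurable borel"
  shows "(\<integral>\<^sup>+ x. H x * indicator {x. cell_index n x = a} x \<partial>lborel)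
     = (\<integral>\<^sup>+ u. ennreal (1 / real n ^ CARD('d)) * H (cell_point n a u) * indicator unit_cube u \<partial>lborel)"
proof -
  define t :: "real^'d" where "t = (\<chi> i. real_of_int (a$i) / real n)"
  define c :: real where "c = 1 / real n"
  have c: "c \<noteq> 0" "ennreal (\<bar>c\<bar> ^ CARD('d)) = ennreal (1 / real n ^ CARD('d))"
    using n by (simp_all add: c_def power_one_over)
  have point: "t + c *\<^sub>R u = cell_point n a u" for u
    by (simp add: cell_point_def vec_eq_iff t_def c_def add_divide_distrib)
  have "(\<integral>\<^sup>+ x. H x * indicator {x. cell_index n x = a} x \<partial>lborel)
      = (\<integral>\<^sup>+ u. ennreal (\<bar>c\<bar> ^ DIM(real^'d)) * (H (t + c *\<^sub>R u) * indicator {x. cell_index n x = a} (t + c *\<^sub>R u)) \<partial>lborel)"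
    by (subst lborel_affine[OF c(1), of t]) (simp add: nn_integral_density nn_integral_distr)
  also have "\<dots> = (\<integral>\<^sup>+ u. ennreal (1 / real n ^ CARD('d)) * H (cell_point n a u) * indicator unit_cube u \<partial>lborel)"
    using cell_index_cell_point_iff[OF n, of a] by (simp add: c(2) point indicator_def mult.assoc)
  finally show ?thesis .
qed

lemma nn_integral_lborel_sum_cells:
  fixes H :: "real^'d \<Rightarrow> ennreal"
  assumes n: "n > 0" and [measurable]: "H \<in> borel_measurable borel"
  shows "(\<integral>\<^sup>+ x. H x \<partial>lborel) = (\<integral>\<^sup>+ a. (\<integral>\<^sup>+ u. ennreal (1 / real n ^ CARD('d)) * H (cell_point n a u)
    * indicator unit_cube u \<partial>lborel) \<partial>count_space UNIV)"
proof -
  interpret C: sigma_finite_measure "count_space (UNIV :: (int^'d) set)"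
    by (rule sigma_finite_measure_count_space_countable) simp
  interpret P: pair_sigma_finite "count_space (UNIV :: (int^'d) set)" "lborel :: (real^'d) measure" ..
  have graph: "{p :: (int^'d) \<times> (real^'d). cell_index n (snd p) = fst p} = (\<Union>a. {a} \<times> {x. cell_index n x = a})"
    by auto
  have [measurable]: "{p :: (int^'d) \<times> (real^'d). cell_index n (snd p) = fst p} \<in> sets (count_space UNIV \<Otimes>\<^sub>M lborel)"
    unfolding graph by (intro sets.countable_UN' pair_measureI) auto
  have "(\<integral>\<^sup>+ x. H x \<partial>lborel) = (\<integral>\<^sup>+ x. (\<integral>\<^sup>+ a. H x * indicator {x. cell_index n x = a} x \<partial>count_space UNIV) \<partial>lborel)"
  proof (rule nn_integral_cong)
    fix x :: "real^'d"
    have "(\<integral>\<^sup>+ a. H x * indicator {x. cell_index n x = a} x \<partial>count_space UNIV)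
        = (\<integral>\<^sup>+ a. H x * indicator {cell_index n x} a \<partial>count_space UNIV)"
      by (intro nn_integral_cong) (auto simp: indicator_def)
    then show "H x = (\<integral>\<^sup>+ a. H x * indicator {x. cell_index n x = a} x \<partial>count_space UNIV)"
      by (simp add: nn_integral_cmult_indicator)
  qed
  also have "\<dots> = (\<integral>\<^sup>+ a. (\<integral>\<^sup>+ x. H x * indicator {x. cell_index n x = a} x \<partial>lborel) \<partial>count_space UNIV)"
  proof (rule P.Fubini')
    have "(\<lambda>p :: (int^'d) \<times> (real^'d). H (snd p) * indicator {p. cell_index n (snd p) = fst p} p)
        \<in> borel_measurable (count_space UNIV \<Otimes>\<^sub>M lborel)"
      by measurable
    then show "(\<lambda>(a, x). H x * indicator {x. cell_index n x = a} x) \<in> borel_measurable (count_space UNIV \<Otimes>\<^sub>M lborel)"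
      by (rule measurable_cong[THEN iffD1, rotated]) (auto simp: indicator_def)
  qed
  also have "\<dots> = (\<integral>\<^sup>+ a. (\<integral>\<^sup>+ u. ennreal (1 / real n ^ CARD('d)) * H (cell_point n a u)
      * indicator unit_cube u \<partial>lborel) \<partial>count_space UNIV)"
    by (intro nn_integral_cong nn_integral_cell[OF n]) simp
  finally show ?thesis .
qed

lemma emeasure_cell:
  assumes "n > 0"
  shows "emeasure lborel {x::real^'d. cell_index n x = a} = ennreal (1 / real n ^ CARD('d))"
  using nn_integral_cell[OF assms, of "\<lambda>_. 1" a]
  by (simp add: nn_integral_cmult_indicator emeasure_unit_cube)

lemma measure_cell:
  assumes "n > 0"
  shows "measure lborel {x::real^'d. cell_index n x = a} = 1 / real n ^ CARD('d)"
  by (simp add: measure_def emeasure_cell[OF assms])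

lemma negligible_coordinate_hyperplane: "negligible {x::real^'d. x$i = c}"
proof -
  have "{x::real^'d. x$i = c} = {x. x \<bullet> axis i 1 = c}" by (simp add: cart_eq_inner_axis)
  then show ?thesis by (simp add: negligible_standard_hyperplane)
qed

section \<open>Quantizing a random vector with a density on the unit cube\<close>

locale unit_cube_density = information_space M b for M :: "'a measure" and b :: real +
  fixes X :: "'a \<Rightarrow> real^'d" and f :: "real^'d \<Rightarrow> real"
  assumes distributed_X: "distributed M lborel X (\<lambda>x. ennreal (f x))"
    and density_nonneg: "\<And>x. 0 \<le> f x"
    and X_in_cube: "\<And>\<omega> i. \<omega> \<in> space M \<Longrightarrow> X \<omega> $ i \<in> {0..1}"
    and integrable_density_log: "integrable lborel (\<lambda>x. f x * log b (f x))"
begin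

lemma X_measurable[measurable]: "X \<in> M \<rightarrow>\<^sub>M borel"
  using distributed_X by (simp add: distributed_def)

lemma density_measurable[measurable]: "f \<in> borel_measurable borel"
  using distributed_real_measurable[OF _ distributed_X] density_nonneg by simp

lemma integrable_density: "integrable lborel f"
proof (rule integrableI_nonneg)
  have "(\<integral>\<^sup>+ x. ennreal (f x) \<partial>lborel) = emeasure (distr M lborel X) (space lborel)"
    using distributed_X by (simp add: distributed_def emeasure_density)
  then show "(\<integral>\<^sup>+ x. ennreal (f x) \<partial>lborel) < \<infinity>" by (simp add: emeasure_distr emeasure_space_1)
qed (auto simp: density_nonneg)

lemma AE_X_in_unit_cube: "AE \<omega> in M. X \<omega> \<in> unit_cube"
proof -
  have "AE \<omega> in M. X \<omega> $ i \<noteq> 1" for i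
  proof -
    have [measurable]: "{x::real^'d. x$i = 1} \<in> sets borel"
      using measurable_sets_borel[OF vec_nth_borel_measurable[of i], of "{1}"] by (simp add: vimage_def)
    have "AE x in density lborel (\<lambda>x. ennreal (f x)). x$i \<noteq> 1"
      using AE_lborel_not_in_negligible[OF negligible_coordinate_hyperplane[of i 1]]
      by (subst AE_density) (auto elim!: eventually_mono)
    moreover have eq: "distr M lborel X = density lborel (\<lambda>x. ennreal (f x))"
      using distributed_X by (simp add: distributed_def)
    ultimately have "AE x in distr M lborel X. x$i \<noteq> 1" by (subst eq)
    then show ?thesis by (subst (asm) AE_distr_iff) auto
  qed
  then have "AE \<omega> in M. \<forall>i. X \<omega> $ i \<noteq> 1" by (simp add: AE_all_countable)
  then show ?thesis
    by (rule AE_mp) (use X_in_cube in \<open>force simp: unit_cube_def less_le intro!: AE_I2\<close>)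
qed

lemma AE_density_zero_outside_unit_cube: "AE x in lborel. x \<notin> unit_cube \<longrightarrow> f x = 0"
proof -
  have [measurable]: "- unit_cube \<in> sets (lborel :: (real^'d) measure)" by simp
  have "{\<omega> \<in> space M. X \<omega> \<notin> unit_cube} = X -` (- unit_cube) \<inter> space M" by auto
  then have "emeasure M (X -` (- unit_cube) \<inter> space M) = 0"
    using AE_E2[OF AE_X_in_unit_cube] by simp
  then have "(\<integral>\<^sup>+ x. ennreal (f x) * indicator (- unit_cube) x \<partial>lborel) = 0"
    by (simp add: distributed_emeasure[OF distributed_X])
  then have "AE x in lborel. ennreal (f x) * indicator (- unit_cube) x = 0"
    by (subst (asm) nn_integral_0_iff_AE) auto
  then show ?thesis by eventually_elim (auto simp: indicator_def density_nonneg)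
qed

definition joint_density :: "nat \<Rightarrow> (int^'d) \<times> (real^'d) \<Rightarrow> real" where
  "joint_density n p = (1 / real n ^ CARD('d)) * f (cell_point n (fst p) (snd p)) * indicator unit_cube (snd p)"

definition cell_prob :: "nat \<Rightarrow> int^'d \<Rightarrow> real" where
  "cell_prob n a = measure M {\<omega> \<in> space M. cell_index n (X \<omega>) = a}"

definition offset_density :: "nat \<Rightarrow> real^'d \<Rightarrow> real" where
  "offset_density n u = enn2real (\<integral>\<^sup>+ a. ennreal (joint_density n (a, u)) \<partial>count_space UNIV)"

definition cell_density :: "nat \<Rightarrow> real^'d \<Rightarrow> real" where
  "cell_density n x = real n ^ CARD('d) * cell_prob n (cell_index n x)"

lemma joint_density_nonneg: "0 \<le> joint_density n p"
  by (simp add: joint_density_def density_nonneg)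

lemma cell_prob_nonneg: "0 \<le> cell_prob n a"
  by (simp add: cell_prob_def)

lemma offset_density_nonneg: "0 \<le> offset_density n u"
  by (simp add: offset_density_def)

lemma cell_density_nonneg: "0 \<le> cell_density n x"
  by (simp add: cell_density_def cell_prob_nonneg)

lemma joint_density_measurable[measurable]:
  "joint_density n \<in> borel_measurable (count_space UNIV \<Otimes>\<^sub>M lborel)"
proof -
  have "(\<lambda>p::(int^'d) \<times> (real^'d). snd p $ i) \<in> borel_measurable (count_space UNIV \<Otimes>\<^sub>M lborel)" for i
    by (rule measurable_compose[OF measurable_snd]) simp
  then show ?thesis unfolding joint_density_def cell_point_def by measurable
qed

lemma sigma_finite_count_space_vec: "sigma_finite_measure (count_space (UNIV :: (int^'d) set))"
  by (rule sigma_finite_measure_count_space_countable) simp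

lemma distributed_cell_index_offset:
  assumes n: "n > 0"
  shows "distributed M (count_space UNIV \<Otimes>\<^sub>M lborel)
    (\<lambda>\<omega>. (cell_index n (X \<omega>), cell_offset n (X \<omega>))) (\<lambda>p. ennreal (joint_density n p))"
proof (rule distributed_jointI[OF sigma_finite_count_space_vec lborel.sigma_finite_measure_axioms])
  fix A B assume A: "A \<in> sets (count_space (UNIV :: (int^'d) set))" and B: "B \<in> sets (lborel :: (real^'d) measure)"
  let ?S = "{x. cell_index n x \<in> A \<and> cell_offset n x \<in> B}"
  have S[measurable]: "?S \<in> sets lborel"
    using measurable_sets[OF cell_index_measurable, of A n] measurable_sets[OF cell_offset_measurable, of B n] B
    by (auto simp: vimage_def Collect_conj_eq)
  have "{\<omega> \<in> space M. cell_index n (X \<omega>) \<in> A \<and> cell_offset n (X \<omega>) \<in> B} = X -` ?S \<inter> space M" by auto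
  then have "emeasure M {\<omega> \<in> space M. cell_index n (X \<omega>) \<in> A \<and> cell_offset n (X \<omega>) \<in> B}
      = (\<integral>\<^sup>+ x. ennreal (f x) * indicator ?S x \<partial>lborel)"
    using distributed_emeasure[OF distributed_X S] by simp
  also have "\<dots> = (\<integral>\<^sup>+ a. (\<integral>\<^sup>+ u. ennreal (1 / real n ^ CARD('d)) * (ennreal (f (cell_point n a u))
      * indicator ?S (cell_point n a u)) * indicator unit_cube u \<partial>lborel) \<partial>count_space UNIV)"
    by (rule nn_integral_lborel_sum_cells[OF n]) measurable
  also have "\<dots> = (\<integral>\<^sup>+ a. (\<integral>\<^sup>+ u. ennreal (joint_density n (a, u)) * indicator B u \<partial>lborel) * indicator A a
      \<partial>count_space UNIV)"
  proof (rule nn_integral_cong)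
    fix a
    have pointwise: "ennreal (1 / real n ^ CARD('d)) * (ennreal (f (cell_point n a u))
        * indicator ?S (cell_point n a u)) * indicator unit_cube u
      = ennreal (joint_density n (a, u)) * indicator B u * indicator A a" for u
    proof -
      have "ennreal (1 / real n ^ CARD('d)) * ennreal (f (cell_point n a u))
          = ennreal (f (cell_point n a u) / real n ^ CARD('d))"
        by (subst ennreal_mult[symmetric]) (auto simp: density_nonneg)
      then show ?thesis
        using cell_index_cell_point_iff[OF n, of a u] cell_offset_cell_point[OF n, of u a]
        by (auto simp: joint_density_def indicator_def)
    qed
    have "(\<integral>\<^sup>+ u. ennreal (1 / real n ^ CARD('d)) * (ennreal (f (cell_point n a u))
        * indicator ?S (cell_point n a u)) * indicator unit_cube u \<partial>lborel)
      = (\<integral>\<^sup>+ u. ennreal (joint_density n (a, u)) * indicator B u * indicator A a \<partial>lborel)"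
      by (simp only: pointwise)
    also have "\<dots> = (\<integral>\<^sup>+ u. ennreal (joint_density n (a, u)) * indicator B u \<partial>lborel) * indicator A a"
      by (rule nn_integral_multc) (use B in measurable)
    finally show "(\<integral>\<^sup>+ u. ennreal (1 / real n ^ CARD('d)) * (ennreal (f (cell_point n a u))
        * indicator ?S (cell_point n a u)) * indicator unit_cube u \<partial>lborel)
      = (\<integral>\<^sup>+ u. ennreal (joint_density n (a, u)) * indicator B u \<partial>lborel) * indicator A a" .
  qed
  finally show "emeasure M {\<omega> \<in> space M. cell_index n (X \<omega>) \<in> A \<and> cell_offset n (X \<omega>) \<in> B}
    = (\<integral>\<^sup>+ a. (\<integral>\<^sup>+ u. ennreal (joint_density n (a, u)) * indicator B u \<partial>lborel) * indicator A a
      \<partial>count_space UNIV)" .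
qed (auto simp: joint_density_nonneg)

lemma distributed_cell_index:
  assumes n: "n > 0"
  shows "distributed M (count_space UNIV) (\<lambda>\<omega>. cell_index n (X \<omega>)) (\<lambda>a. ennreal (cell_prob n a))"
proof -
  let ?P = "\<lambda>a. \<integral>\<^sup>+ u. ennreal (joint_density n (a, u)) \<partial>lborel"
  have D: "distributed M (count_space UNIV) (\<lambda>\<omega>. cell_index n (X \<omega>)) ?P"
    by (rule distr_marginal1[OF sigma_finite_count_space_vec lborel.sigma_finite_measure_axioms
          distributed_cell_index_offset[OF n]])
  have "?P a = ennreal (cell_prob n a)" for a
  proof -
    have "emeasure M ((\<lambda>\<omega>. cell_index n (X \<omega>)) -` {a} \<inter> space M)
        = (\<integral>\<^sup>+ a'. ?P a' * indicator {a} a' \<partial>count_space UNIV)"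
      by (rule distributed_emeasure[OF D]) simp
    also have "\<dots> = ?P a"
      by (subst nn_integral_indicator_singleton) auto
    finally show ?thesis
      by (simp add: cell_prob_def emeasure_eq_measure vimage_def Int_def conj_commute)
  qed
  then show ?thesis using D by simp
qed

lemma distributed_cell_offset:
  assumes n: "n > 0"
  shows "distributed M lborel (\<lambda>\<omega>. cell_offset n (X \<omega>)) (\<lambda>u. ennreal (offset_density n u))"
proof -
  let ?Q = "\<lambda>u. \<integral>\<^sup>+ a. ennreal (joint_density n (a, u)) \<partial>count_space UNIV"
  have D: "distributed M lborel (\<lambda>\<omega>. cell_offset n (X \<omega>)) ?Q"
    by (rule distr_marginal2[OF sigma_finite_count_space_vec lborel.sigma_finite_measure_axioms
          distributed_cell_index_offset[OF n]])
  have Q[measurable]: "?Q \<in> borel_measurable lborel" using D by (simp add: distributed_def)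
  have "(\<integral>\<^sup>+ u. ?Q u \<partial>lborel) = emeasure (distr M lborel (\<lambda>\<omega>. cell_offset n (X \<omega>))) (space lborel)"
    using D by (simp add: distributed_def emeasure_density)
  then have "(\<integral>\<^sup>+ u. ?Q u \<partial>lborel) \<noteq> \<infinity>" by (simp add: emeasure_distr emeasure_space_1)
  from nn_integral_PInf_AE[OF Q this] have "AE u in lborel. ?Q u = ennreal (offset_density n u)"
    by eventually_elim (auto simp: offset_density_def less_top)
  moreover have "(\<lambda>u. ennreal (offset_density n u)) \<in> borel_measurable lborel"
    unfolding offset_density_def by measurable
  ultimately show ?thesis
    using D by (subst distributed_cong_density[symmetric]) auto
qed

lemma offset_density_measurable[measurable]: "n > 0 \<Longrightarrow> offset_density n \<in> borel_measurable borel"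
  using distributed_real_measurable[OF _ distributed_cell_offset] offset_density_nonneg by simp

lemma offset_density_zero_outside_unit_cube: "u \<notin> unit_cube \<Longrightarrow> offset_density n u = 0"
  by (simp add: offset_density_def joint_density_def)

text \<open>\<open>cell_neg_entropy n\<close> is \<open>d log n - H(\<lfloor>n X\<rfloor>)\<close>; \<open>neg_diff_entropy\<close> is \<open>- h(X)\<close>.\<close>
definition cell_neg_entropy :: "nat \<Rightarrow> real" where
  "cell_neg_entropy n = (\<Sum>a\<in>unit_cube_cells n. cell_prob n a * log b (real n ^ CARD('d) * cell_prob n a))"

definition neg_diff_entropy :: real where
  "neg_diff_entropy = (\<integral>x. f x * log b (f x) \<partial>lborel)"

definition mutual_info :: "nat \<Rightarrow> real" where
  "mutual_info n = mutual_information b (count_space UNIV) lborel (\<lambda>\<omega>. cell_index n (X \<omega>)) (\<lambda>\<omega>. cell_offset n (X \<omega>))"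

lemma expectation_log_cell_density:
  assumes n: "n > 0"
  shows "integrable M (\<lambda>\<omega>. log b (cell_density n (X \<omega>)))"
    and "(\<integral>\<omega>. log b (cell_density n (X \<omega>)) \<partial>M) = cell_neg_entropy n"
proof -
  let ?c = "\<lambda>a. log b (real n ^ CARD('d) * cell_prob n a)"
  let ?g = "\<lambda>\<omega>. \<Sum>a\<in>unit_cube_cells n. ?c a * indicator {\<omega> \<in> space M. cell_index n (X \<omega>) = a} \<omega>"
  have [measurable]: "{\<omega> \<in> space M. cell_index n (X \<omega>) = a} \<in> sets M" for a by measurable
  have AE: "AE \<omega> in M. log b (cell_density n (X \<omega>)) = ?g \<omega>"
    using AE_X_in_unit_cube
  proof (rule AE_mp, intro AE_I2 impI)
    fix \<omega> assume \<omega>: "\<omega> \<in> space M" "X \<omega> \<in> unit_cube"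
    then have "cell_index n (X \<omega>) \<in> unit_cube_cells n" using cell_index_in_unit_cube_cells_iff[OF n] by blast
    moreover have "?g \<omega> = (\<Sum>a\<in>unit_cube_cells n. if cell_index n (X \<omega>) = a then ?c a else 0)"
      using \<omega> by (intro sum.cong) (auto simp: indicator_def)
    ultimately show "log b (cell_density n (X \<omega>)) = ?g \<omega>"
      by (simp add: cell_density_def sum.delta finite_unit_cube_cells)
  qed
  have ig: "integrable M ?g"
    by (intro Bochner_Integration.integrable_sum integrable_mult_right integrable_real_indicator)
      (auto simp: less_top[symmetric])
  have m: "(\<lambda>\<omega>. log b (cell_density n (X \<omega>))) \<in> borel_measurable M"
    unfolding cell_density_def cell_prob_def by measurable
  show "integrable M (\<lambda>\<omega>. log b (cell_density n (X \<omega>)))"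
    using integrable_cong_AE[OF m _ AE] ig by simp
  have "(\<integral>\<omega>. log b (cell_density n (X \<omega>)) \<partial>M) = (\<integral>\<omega>. ?g \<omega> \<partial>M)"
    by (rule integral_cong_AE[OF m _ AE]) simp
  also have "\<dots> = cell_neg_entropy n"
    by (subst Bochner_Integration.integral_sum)
      (auto simp: cell_neg_entropy_def cell_prob_def mult.commute less_top[symmetric])
  finally show "(\<integral>\<omega>. log b (cell_density n (X \<omega>)) \<partial>M) = cell_neg_entropy n" .
qed

lemma expectation_log_density:
  shows "integrable M (\<lambda>\<omega>. log b (f (X \<omega>)))"
    and "(\<integral>\<omega>. log b (f (X \<omega>)) \<partial>M) = neg_diff_entropy"
  using distributed_integrable[OF distributed_X, of "\<lambda>x. log b (f x)"] integrable_density_log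
    distributed_integral[OF distributed_X, of "\<lambda>x. log b (f x)"]
  by (auto simp: density_nonneg neg_diff_entropy_def)

text \<open>Gibbs' inequality for the offset: its density lives on a set of measure at most one.\<close>
lemma expectation_log_offset_density_nonneg:
  assumes n: "n > 0" and int: "integrable M (\<lambda>\<omega>. log b (offset_density n (cell_offset n (X \<omega>))))"
  shows "0 \<le> (\<integral>\<omega>. log b (offset_density n (cell_offset n (X \<omega>))) \<partial>M)"
proof -
  let ?Q = "\<lambda>\<omega>. offset_density n (cell_offset n (X \<omega>))"
  let ?Z = "{u. offset_density n u \<noteq> 0}"
  note [measurable] = offset_density_measurable[OF n]
  have pos: "AE \<omega> in M. 0 < ?Q \<omega>"
    by (rule distributed_AE_density_pos[OF distributed_cell_offset[OF n]]) (auto simp: offset_density_nonneg)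
  have Z[measurable]: "?Z \<in> sets lborel" by measurable
  have "emeasure lborel ?Z \<le> emeasure lborel (unit_cube :: (real^'d) set)"
    using offset_density_zero_outside_unit_cube by (intro emeasure_mono) auto
  then have Z_le: "emeasure lborel ?Z \<le> 1" by (simp add: emeasure_unit_cube)
  have eqZ: "offset_density n u * (1 / offset_density n u) = indicator ?Z u" for u
    by (simp add: indicator_def)
  have "integrable lborel (\<lambda>u. offset_density n u * (1 / offset_density n u))"
    unfolding eqZ using Z_le by (intro integrable_real_indicator) (auto simp: le_less_trans)
  then have i1: "integrable M (\<lambda>\<omega>. 1 / ?Q \<omega>)"
    by (subst distributed_integrable[OF distributed_cell_offset[OF n], symmetric]) (auto simp: offset_density_nonneg)
  have "(\<integral>\<omega>. 1 / ?Q \<omega> \<partial>M) = (\<integral>u. offset_density n u * (1 / offset_density n u) \<partial>lborel)"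
    by (rule distributed_integral[OF distributed_cell_offset[OF n], symmetric]) (auto simp: offset_density_nonneg)
  also have "\<dots> = measure lborel ?Z" unfolding eqZ by simp
  also have "\<dots> \<le> 1" using Z_le by (simp add: measure_def enn2real_leI)
  finally have "0 \<le> (\<integral>\<omega>. (1 - 1 / ?Q \<omega>) / ln b \<partial>M)"
    using i1 b_gt_1 by (simp add: prob_space)
  also have "\<dots> \<le> (\<integral>\<omega>. log b (?Q \<omega>) \<partial>M)"
    using i1 int pos
    by (intro integral_mono_AE) (auto elim!: eventually_mono
        intro!: divide_right_mono one_minus_inverse_le_ln simp: log_def less_imp_le[OF b_gt_1])
  finally show ?thesis .
qed

definition info_density :: "nat \<Rightarrow> (int^'d) \<times> (real^'d) \<Rightarrow> real" where
  "info_density n p = log b (joint_density n p / (cell_prob n (fst p) * offset_density n (snd p)))"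

lemma info_density_measurable[measurable]:
  assumes "n > 0" shows "info_density n \<in> borel_measurable (count_space UNIV \<Otimes>\<^sub>M lborel)"
proof -
  note [measurable] = offset_density_measurable[OF assms]
  show ?thesis
    using measurable_compose[OF measurable_fst, of "cell_prob n" "count_space UNIV" lborel borel]
    unfolding info_density_def by measurable
qed

lemma AE_info_density_eq:
  assumes n: "n > 0"
  shows "AE \<omega> in M. info_density n (cell_index n (X \<omega>), cell_offset n (X \<omega>))
    = log b (f (X \<omega>)) - log b (cell_density n (X \<omega>)) - log b (offset_density n (cell_offset n (X \<omega>)))"
proof -
  have joint_density_X: "joint_density n (cell_index n (X \<omega>), cell_offset n (X \<omega>)) = f (X \<omega>) / real n ^ CARD('d)" for \<omega>
    using cell_point_index_offset[OF n, of "X \<omega>"] cell_offset_in_unit_cube[of n "X \<omega>"]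
    by (simp add: joint_density_def)
  have "AE \<omega> in M. 0 < f (X \<omega>)"
    by (rule distributed_AE_density_pos[OF distributed_X]) (auto simp: density_nonneg)
  moreover have "AE \<omega> in M. 0 < cell_prob n (cell_index n (X \<omega>))"
    by (rule distributed_AE_density_pos[OF distributed_cell_index[OF n]]) (auto simp: cell_prob_nonneg)
  moreover have "AE \<omega> in M. 0 < offset_density n (cell_offset n (X \<omega>))"
    by (rule distributed_AE_density_pos[OF distributed_cell_offset[OF n]])
      (auto simp: offset_density_nonneg offset_density_measurable[OF n])
  ultimately show ?thesis
    by eventually_elim
      (use n in \<open>simp add: info_density_def joint_density_X cell_density_def log_divide log_mult mult.assoc\<close>)
qed

lemma mutual_info_bounds:
  assumes n: "n > 0"
  shows "0 \<le> mutual_info n \<and> mutual_info n \<le> max 0 (neg_diff_entropy - cell_neg_entropy n)"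
proof -
  let ?AB = "\<lambda>\<omega>. (cell_index n (X \<omega>), cell_offset n (X \<omega>))"
  let ?logq = "\<lambda>\<omega>. log b (offset_density n (cell_offset n (X \<omega>)))"
  note dists = distributed_cell_index[OF n] _ distributed_cell_offset[OF n] _ distributed_cell_index_offset[OF n]
  note [measurable] = offset_density_measurable[OF n]
  have mutual_info_eq: "mutual_info n = (\<integral>p. joint_density n p * info_density n p \<partial>(count_space UNIV \<Otimes>\<^sub>M lborel))"
    unfolding mutual_info_def info_density_def
    by (rule mutual_information_distr[OF sigma_finite_count_space_vec lborel.sigma_finite_measure_axioms dists])
      (auto simp: cell_prob_nonneg offset_density_nonneg joint_density_nonneg)
  have integrable_iff: "integrable (count_space UNIV \<Otimes>\<^sub>M lborel) (\<lambda>p. joint_density n p * info_density n p)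
      \<longleftrightarrow> integrable M (\<lambda>\<omega>. info_density n (?AB \<omega>))"
    by (rule distributed_integrable[OF distributed_cell_index_offset[OF n]]) (auto simp: joint_density_nonneg n)
  show ?thesis
  proof (cases "integrable M (\<lambda>\<omega>. info_density n (?AB \<omega>))")
    case True
    have "0 \<le> mutual_info n"
      unfolding mutual_info_def
      by (rule mutual_information_nonneg[OF sigma_finite_count_space_vec lborel.sigma_finite_measure_axioms dists])
        (use True integrable_iff in \<open>auto simp: info_density_def cell_prob_nonneg offset_density_nonneg joint_density_nonneg\<close>)
    have [measurable]: "(\<lambda>\<omega>. info_density n (?AB \<omega>)) \<in> borel_measurable M" using n by measurable
    note integrable = expectation_log_density(1) expectation_log_cell_density(1)[OF n] True
    have "integrable M ?logq"
      using integrable AE_info_density_eq[OF n]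
      by (subst integrable_cong_AE[where g="\<lambda>\<omega>. log b (f (X \<omega>)) - log b (cell_density n (X \<omega>)) - info_density n (?AB \<omega>)"])
        (auto elim!: eventually_mono intro: borel_measurable_integrable)
    have "mutual_info n = (\<integral>\<omega>. info_density n (?AB \<omega>) \<partial>M)"
      using mutual_info_eq distributed_integral[OF distributed_cell_index_offset[OF n]] n
      by (simp add: joint_density_nonneg)
    also have "\<dots> = (\<integral>\<omega>. log b (f (X \<omega>)) - log b (cell_density n (X \<omega>)) - ?logq \<omega> \<partial>M)"
      by (rule integral_cong_AE[OF _ _ AE_info_density_eq[OF n]])
        (use integrable \<open>integrable M ?logq\<close> in \<open>auto intro: borel_measurable_integrable\<close>)
    also have "\<dots> = neg_diff_entropy - cell_neg_entropy n - (\<integral>\<omega>. ?logq \<omega> \<partial>M)"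
      using integrable \<open>integrable M ?logq\<close>
      by (simp add: expectation_log_density(2) expectation_log_cell_density(2)[OF n])
    finally show ?thesis
      using \<open>0 \<le> mutual_info n\<close> expectation_log_offset_density_nonneg[OF n \<open>integrable M ?logq\<close>] by simp
  next
    case False
    then show ?thesis using mutual_info_eq integrable_iff by (simp add: not_integrable_integral_eq)
  qed
qed

lemma cell_prob_eq_integral:
  assumes "n > 0"
  shows "cell_prob n a = (\<integral>x. f x * indicator {x. cell_index n x = a} x \<partial>lborel)"
proof -
  have [measurable]: "{x. cell_index n x = a} \<in> sets (lborel :: (real^'d) measure)" by simp
  have "{\<omega> \<in> space M. cell_index n (X \<omega>) = a} = X -` {x. cell_index n x = a} \<inter> space M" by auto
  then have "emeasure M {\<omega> \<in> space M. cell_index n (X \<omega>) = a}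
      = (\<integral>\<^sup>+ x. ennreal (f x) * indicator {x. cell_index n x = a} x \<partial>lborel)"
    using distributed_emeasure[OF distributed_X, of "{x. cell_index n x = a}"] by simp
  also have "\<dots> = (\<integral>\<^sup>+ x. ennreal (f x * indicator {x. cell_index n x = a} x) \<partial>lborel)"
    by (intro nn_integral_cong) (auto simp: indicator_def)
  finally have "emeasure M {\<omega> \<in> space M. cell_index n (X \<omega>) = a}
      = (\<integral>\<^sup>+ x. ennreal (f x * indicator {x. cell_index n x = a} x) \<partial>lborel)" .
  then show ?thesis
    unfolding cell_prob_def measure_def
    by (subst integral_eq_nn_integral) (auto simp: density_nonneg)
qed

lemma cell_density_deviation_le:
  assumes n: "n > 0"
  shows "\<bar>cell_density n x - f x\<bar>
    \<le> (LINT w:cbox (x - (1 / real n) *\<^sub>R One) (x + (1 / real n) *\<^sub>R One)|lborel. \<bar>f w - f x\<bar>) * real n ^ CARD('d)"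
proof -
  let ?Q = "{y. cell_index n y = cell_index n x}"
  let ?C = "cbox (x - (1 / real n) *\<^sub>R One) (x + (1 / real n) *\<^sub>R One)"
  let ?c = "real n ^ CARD('d)"
  have c: "?c > 0" using n by simp
  have fin: "emeasure lborel ?Q < \<infinity>" by (simp add: emeasure_cell[OF n])
  have iQ: "integrable lborel (\<lambda>y. indicator ?Q y * \<bar>f y - f x\<bar>)"
    by (rule integrable_indicator_abs_diff[OF integrable_density _ fin]) simp
  have iC: "integrable lborel (\<lambda>y. indicator ?C y * \<bar>f y - f x\<bar>)"
    by (rule integrable_indicator_abs_diff[OF integrable_density _ emeasure_lborel_cbox_finite]) simp
  have "cell_density n x - f x = ?c * (\<integral>y. (f y - f x) * indicator ?Q y \<partial>lborel)"
    using c fin integrable_real_mult_indicator[OF _ integrable_density, of ?Q]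
    by (simp add: cell_density_def cell_prob_eq_integral[OF n] measure_cell[OF n] left_diff_distrib
        right_diff_distrib integrable_real_indicator)
  also have "\<bar>\<dots>\<bar> \<le> ?c * (\<integral>y. indicator ?Q y * \<bar>f y - f x\<bar> \<partial>lborel)"
    using c integral_abs_bound[of lborel "\<lambda>y. (f y - f x) * indicator ?Q y"]
    by (simp add: abs_mult mult.commute)
  also have "\<dots> \<le> ?c * (\<integral>y. indicator ?C y * \<bar>f y - f x\<bar> \<partial>lborel)"
    using c cell_subset_centered_cbox[OF n, of _ x]
    by (intro mult_left_mono integral_mono[OF iQ iC]) (auto simp: indicator_def)
  finally show ?thesis by (simp add: set_lebesgue_integral_def mult.commute)
qed

lemma AE_cell_density_tendsto: "AE x in lborel. (\<lambda>n. cell_density n x) \<longlonglongrightarrow> f x"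
  using AE_lborel_Lebesgue_point[OF integrable_density]
proof eventually_elim
  case (elim x)
  let ?G = "\<lambda>h. (LINT w:cbox (x - h *\<^sub>R One) (x + h *\<^sub>R One)|lborel. \<bar>f w - f x\<bar>) / h ^ CARD('d)"
  have "filterlim (\<lambda>n. 1 / real n) (at_right 0) sequentially"
    by (intro tendsto_imp_filterlim_at_right lim_const_over_n)
      (auto simp: eventually_sequentially intro: exI[of _ 1])
  then have lim: "(\<lambda>n. ?G (1 / real n)) \<longlonglongrightarrow> 0"
    by (rule filterlim_compose[OF elim])
  have "\<forall>\<^sub>F n in sequentially. norm (cell_density n x - f x) \<le> ?G (1 / real n)"
    using eventually_gt_at_top[of "0::nat"]
  proof eventually_elim
    case (elim n)
    then show ?case using cell_density_deviation_le[OF elim, of x] by (simp add: power_one_over)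
  qed
  from Lim_null_comparison[OF this lim] show ?case
    by (rule LIM_zero_cancel)
qed

lemma cell_neg_entropy_eq_integral:
  assumes n: "n > 0"
  shows "integrable lborel (\<lambda>x. indicator unit_cube x * (cell_density n x * log b (cell_density n x)))"
    and "cell_neg_entropy n = (\<integral>x. indicator unit_cube x * (cell_density n x * log b (cell_density n x)) \<partial>lborel)"
proof -
  let ?c = "real n ^ CARD('d)"
  let ?h = "\<lambda>a. (?c * cell_prob n a) * log b (?c * cell_prob n a)"
  let ?G = "\<lambda>x. \<Sum>a\<in>unit_cube_cells n. ?h a * indicator {x. cell_index n x = a} x"
  have eq: "indicator unit_cube x * (cell_density n x * log b (cell_density n x)) = ?G x" for x
  proof -
    have "?G x = (\<Sum>a\<in>unit_cube_cells n. if cell_index n x = a then ?h a else 0)"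
      by (intro sum.cong) (auto simp: indicator_def)
    then show ?thesis
      using cell_index_in_unit_cube_cells_iff[OF n, of x]
      by (simp add: sum.delta finite_unit_cube_cells cell_density_def indicator_def)
  qed
  have fin: "emeasure lborel {x::real^'d. cell_index n x = a} < \<infinity>" for a by (simp add: emeasure_cell[OF n])
  have "integrable lborel ?G"
    using fin by (intro Bochner_Integration.integrable_sum integrable_mult_right integrable_real_indicator) auto
  then show "integrable lborel (\<lambda>x. indicator unit_cube x * (cell_density n x * log b (cell_density n x)))"
    by (simp add: eq)
  have "(\<integral>x. ?G x \<partial>lborel) = (\<Sum>a\<in>unit_cube_cells n. ?h a * (1 / ?c))"
    using fin by (subst Bochner_Integration.integral_sum) (auto simp: measure_cell[OF n])
  also have "\<dots> = cell_neg_entropy n"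
    unfolding cell_neg_entropy_def using n by (intro sum.cong) auto
  finally show "cell_neg_entropy n = (\<integral>x. indicator unit_cube x * (cell_density n x * log b (cell_density n x)) \<partial>lborel)"
    by (simp add: eq)
qed

lemma neg_diff_entropy_eq_integral:
  shows "integrable lborel (\<lambda>x. indicator unit_cube x * (f x * log b (f x)))"
    and "neg_diff_entropy = (\<integral>x. indicator unit_cube x * (f x * log b (f x)) \<partial>lborel)"
proof -
  have AE: "AE x in lborel. f x * log b (f x) = indicator unit_cube x * (f x * log b (f x))"
    using AE_density_zero_outside_unit_cube by eventually_elim (auto simp: indicator_def)
  show "integrable lborel (\<lambda>x. indicator unit_cube x * (f x * log b (f x)))"
    using integrable_cong_AE[OF _ _ AE] integrable_density_log by simp
  show "neg_diff_entropy = (\<integral>x. indicator unit_cube x * (f x * log b (f x)) \<partial>lborel)"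
    unfolding neg_diff_entropy_def by (rule integral_cong_AE[OF _ _ AE]) auto
qed

text \<open>Fatou's lemma on the unit cube, after adding \<open>1 / ln b\<close> to make \<open>t log t\<close> nonnegative.\<close>
lemma eventually_cell_neg_entropy_gt:
  assumes e: "0 < e"
  shows "\<forall>\<^sub>F n in sequentially. neg_diff_entropy - e < cell_neg_entropy n"
proof -
  define K where "K = 1 / ln b"
  define u where "u k x = indicator unit_cube x * (cell_density (Suc k) x * log b (cell_density (Suc k) x) + K)" for k x
  define v where "v x = indicator unit_cube x * (f x * log b (f x) + K)" for x
  have K: "0 \<le> t * log b t + K" if "0 \<le> t" for t
    using mult_log_ge[OF that b_gt_1] by (simp add: K_def)
  have iK: "integrable lborel (\<lambda>x::real^'d. indicator unit_cube x * K)"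
    by (intro integrable_mult_left integrable_real_indicator) (auto simp: emeasure_unit_cube)
  have shift: "(\<integral>x. indicator unit_cube x * (g x + K) \<partial>lborel) = (\<integral>x. indicator unit_cube x * g x \<partial>lborel) + K"
    and shift_integrable: "integrable lborel (\<lambda>x. indicator unit_cube x * (g x + K))"
    if "integrable lborel (\<lambda>x. indicator unit_cube x * g x)" for g :: "real^'d \<Rightarrow> real"
    using that iK Bochner_Integration.integrable_add[OF that iK]
    by (simp_all add: distrib_left measure_def emeasure_unit_cube)
  note cell = cell_neg_entropy_eq_integral[of "Suc k" for k, simplified]
  have "\<forall>\<^sub>F k in sequentially. (\<integral>x. v x \<partial>lborel) - e < (\<integral>x. u k x \<partial>lborel)"
  proof (rule eventually_integral_gt_of_AE_tendsto[OF _ _ _ _ _ e])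
    show "integrable lborel (u k)" for k unfolding u_def by (rule shift_integrable[OF cell(1)])
    show "integrable lborel v" unfolding v_def by (rule shift_integrable[OF neg_diff_entropy_eq_integral(1)])
    show "0 \<le> u k x" "0 \<le> v x" for k x
      by (simp_all add: u_def v_def K cell_density_nonneg density_nonneg)
    show "AE x in lborel. (\<lambda>k. u k x) \<longlonglongrightarrow> v x"
      using AE_cell_density_tendsto
    proof eventually_elim
      case (elim x)
      then have "(\<lambda>k. cell_density (Suc k) x) \<longlonglongrightarrow> f x" by (rule LIMSEQ_Suc)
      then show ?case unfolding u_def v_def
        by (intro tendsto_intros tendsto_mult_log) (auto simp: cell_density_nonneg density_nonneg b_gt_1)
    qed
  qed
  then have "\<forall>\<^sub>F k in sequentially. neg_diff_entropy - e < cell_neg_entropy (Suc k)"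
    by (simp add: u_def v_def shift cell neg_diff_entropy_eq_integral)
  then show ?thesis by (rule eventually_sequentially_Suc[THEN iffD1])
qed

theorem mutual_info_tendsto_zero: "mutual_info \<longlonglongrightarrow> 0"
proof (rule tendsto_sandwich[of "\<lambda>_. 0" _ _ "\<lambda>n. max 0 (neg_diff_entropy - cell_neg_entropy n)"])
  have "\<forall>\<^sub>F n in sequentially. 0 \<le> mutual_info n \<and> mutual_info n \<le> max 0 (neg_diff_entropy - cell_neg_entropy n)"
    using eventually_gt_at_top[of "0::nat"] by eventually_elim (rule mutual_info_bounds)
  then show "\<forall>\<^sub>F n in sequentially. 0 \<le> mutual_info n"
    "\<forall>\<^sub>F n in sequentially. mutual_info n \<le> max 0 (neg_diff_entropy - cell_neg_entropy n)"
    by (auto elim: eventually_mono)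
  show "(\<lambda>n. max 0 (neg_diff_entropy - cell_neg_entropy n)) \<longlonglongrightarrow> 0"
    unfolding tendsto_iff
  proof (intro allI impI)
    fix e :: real assume "0 < e"
    from eventually_cell_neg_entropy_gt[OF this]
    show "\<forall>\<^sub>F n in sequentially. dist (max 0 (neg_diff_entropy - cell_neg_entropy n)) 0 < e"
      by eventually_elim (use \<open>0 < e\<close> in \<open>simp add: dist_real_def\<close>)
  qed
qed simp

end

theorem mainTheorem9:
  fixes M :: "'a measure" and b :: real and X :: "'a \<Rightarrow> real ^ 'd"
    and f :: "real ^ 'd \<Rightarrow> real"
  assumes info: "information_space M b"
    and range01: "\<forall>\<omega>\<in>space M. \<forall>i. X \<omega> $ i \<in> {0..1}"
    and cont_fin_h: "information_space.finite_entropy M b lborel X f"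
    and fin_H: "\<exists>g. information_space.finite_entropy M b (count_space UNIV)
                   (\<lambda>\<omega>. (\<chi> i. \<lfloor>X \<omega> $ i\<rfloor>) :: int ^ 'd) g"
  shows "(\<lambda>k::nat. prob_space.mutual_information M b (count_space UNIV) lborel
            (\<lambda>\<omega>. (\<chi> i. \<lfloor>2 ^ k * X \<omega> $ i\<rfloor>) :: int ^ 'd)
            (\<lambda>\<omega>. \<chi> i. frac (2 ^ k * X \<omega> $ i)))
         \<longlonglongrightarrow> 0"
proof -
  interpret information_space M b by (rule info)
  interpret unit_cube_density M b X f
    using cont_fin_h range01 by unfold_locales (auto simp: finite_entropy_def)
  have "filterlim (\<lambda>k. 2 ^ k :: nat) sequentially sequentially"
    by (rule filterlim_subseq) (simp add: strict_mono_def)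
  from filterlim_compose[OF mutual_info_tendsto_zero this] show ?thesis
    by (simp add: mutual_info_def cell_index_def cell_offset_def)
qed

end
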